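(* Let $\mathcal{M}_1,\mathcal{M}_2$ be real QMMs (all unitary and measurement matrices have real entries) with common alphabets $\Sigma,\Gamma$, state spaces of dimensions $n_1,n_2$, and initial density operators $\rho_1,\rho_2$. Let $N'=\frac12 n_1(n_1+1)+\frac12 n_2(n_2+1)-1$. Then $(\mathcal{M}_1,\rho_1)\sim(\mathcal{M}_2,\rho_2)\iff(\mathcal{M}_1,\rho_1)\sim^{N'}(\mathcal{M}_2,\rho_2)$, and for every $k\in\mathbb{N}$, $(\mathcal{M}_1,\rho_1)\sim_k(\mathcal{M}_2,\rho_2)\iff(\mathcal{M}_1,\rho_1)\sim_k^{N'}(\mathcal{M}_2,\rho_2)$.
   Context: A quantum Mealy machine (QMM) is a tuple $\mathcal{M}=(\Sigma,\Gamma,\mathcal{H},U,M)$ where $\Sigma,\Gamma$ are finite alphabets, $\mathcal{H}$ a finite-dimensional complex Hilbert space, $U=\{U_\sigma\}_{\sigma\in\Sigma}$ unitary operators on $\mathcal{H}$, $M=\{M_\gamma\}_{\gamma\in\Gamma}$ linear operators with $\sum_\gamma M_\gamma^\dagger M_\gamma=I$. For a word $a$, $|a|$ is its length, $a[l:r]=a[l]\cdots a[r]$ (empty if $l>r$), $U_a=U_{a[|a|]}\cdots U_{a[1]}$, $U_\epsilon=I$. A scheduler for $a\in\Sigma^*$ is a finite non-decreasing integer sequence $\mathcal{S}=(s_1\le\dots\le s_{|\mathcal{S}|})$ in $\{0,\dots,|a|\}$ (possibly empty). With $s_0=0$, $s_{|\mathcal{S}|+1}=|a|$, $a_i=a[s_{i-1}+1:s_i]$.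 For $b\in\Gamma^{|\mathcal{S}|}$, $V_{b|a,\mathcal{S}}=U_{a_{|\mathcal{S}|+1}}M_{b_{|\mathcal{S}|}}U_{a_{|\mathcal{S}|}}\cdots M_{b_1}U_{a_1}$ and $\Pr^{\mathcal{M}}_\rho(b|a,\mathcal{S})=\operatorname{tr}(V_{b|a,\mathcal{S}}\rho V_{b|a,\mathcal{S}}^\dagger)$. $(\mathcal{M}_1,\rho_1)\sim(\mathcal{M}_2,\rho_2)$ means $\Pr^{\mathcal{M}_1}_{\rho_1}(b|a,\mathcal{S})=\Pr^{\mathcal{M}_2}_{\rho_2}(b|a,\mathcal{S})$ for all $a\in\Sigma^*$, schedulers $\mathcal{S}$ for $a$, $b\in\Gamma^{|\mathcal{S}|}$; $\sim_k$ restricts to $|\mathcal{S}|\le k$; $\sim^m$ to $|a|+|\mathcal{S}|\le m$; $\sim^m_k$ to both. *)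

theory Defs
  imports "HOL-Analysis.Analysis"
begin

text \<open>Operators on an n-dimensional Hilbert space are represented as complex n x n
matrices, with the dimension given by a finite index type 'n (n = CARD('n)).\<close>

definition adj :: "complex^'n^'m \<Rightarrow> complex^'m^'n" where
  "adj A = (\<chi> i j. cnj (A $ j $ i))"

definition mtrace :: "complex^'n^'n \<Rightarrow> complex" where
  "mtrace A = (\<Sum>i\<in>UNIV. A $ i $ i)"

definition is_unitary :: "complex^'n^'n \<Rightarrow> bool" where
  "is_unitary A \<longleftrightarrow> adj A ** A = mat 1 \<and> A ** adj A = mat 1"

definition real_matrix :: "complex^'n^'m \<Rightarrow> bool" where
  "real_matrix A \<longleftrightarrow> (\<forall>i j. A $ i $ j \<in> \<real>)"

definition density_op :: "complex^'n^'n \<Rightarrow> bool" where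
  "density_op \<rho> \<longleftrightarrow> adj \<rho> = \<rho>
     \<and> (\<forall>v::complex^'n. 0 \<le> Re (\<Sum>i\<in>UNIV. cnj (v $ i) * (\<rho> *v v) $ i)
                          \<and> Im (\<Sum>i\<in>UNIV. cnj (v $ i) * (\<rho> *v v) $ i) = 0)
     \<and> mtrace \<rho> = 1"

definition qmm :: "('s::finite \<Rightarrow> complex^'n^'n) \<Rightarrow> ('g::finite \<Rightarrow> complex^'n^'n) \<Rightarrow> bool" where
  "qmm U M \<longleftrightarrow> (\<forall>s. is_unitary (U s)) \<and> (\<Sum>g\<in>UNIV. adj (M g) ** M g) = mat 1"

definition real_qmm :: "('s::finite \<Rightarrow> complex^'n^'n) \<Rightarrow> ('g::finite \<Rightarrow> complex^'n^'n) \<Rightarrow> bool" where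
  "real_qmm U M \<longleftrightarrow> qmm U M \<and> (\<forall>s. real_matrix (U s)) \<and> (\<forall>g. real_matrix (M g))"

fun Uword :: "('s \<Rightarrow> complex^'n^'n) \<Rightarrow> 's list \<Rightarrow> complex^'n^'n" where
  "Uword U [] = mat 1"
| "Uword U (x # xs) = Uword U xs ** U x"

definition scheduler :: "nat list \<Rightarrow> 'a list \<Rightarrow> bool" where
  "scheduler S a \<longleftrightarrow> sorted S \<and> (\<forall>s\<in>set S. s \<le> length a)"

text \<open>Segments a_1, ..., a_{|S|+1} with a_i = a[s_{i-1}+1 : s_i], s_0 = 0, s_{|S|+1} = |a|.\<close>
definition segments :: "'a list \<Rightarrow> nat list \<Rightarrow> 'a list list" where
  "segments a S = map (\<lambda>(l, r). drop l (take r a)) (zip (0 # S) (S @ [length a]))"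

text \<open>Vprod U M [a_1,...,a_{m+1}] [b_1,...,b_m] = U_{a_{m+1}} M_{b_m} ... M_{b_1} U_{a_1}.\<close>
fun Vprod :: "('s \<Rightarrow> complex^'n^'n) \<Rightarrow> ('g \<Rightarrow> complex^'n^'n) \<Rightarrow> 's list list \<Rightarrow> 'g list \<Rightarrow> complex^'n^'n" where
  "Vprod U M [w] [] = Uword U w"
| "Vprod U M (w # ws) (g # gs) = Vprod U M ws gs ** M g ** Uword U w"
| "Vprod U M _ _ = mat 0"

definition Vop :: "('s \<Rightarrow> complex^'n^'n) \<Rightarrow> ('g \<Rightarrow> complex^'n^'n) \<Rightarrow> 'g list \<Rightarrow> 's list \<Rightarrow> nat list \<Rightarrow> complex^'n^'n" where
  "Vop U M b a S = Vprod U M (segments a S) b"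

definition Pr :: "('s \<Rightarrow> complex^'n^'n) \<Rightarrow> ('g \<Rightarrow> complex^'n^'n) \<Rightarrow> complex^'n^'n \<Rightarrow> 'g list \<Rightarrow> 's list \<Rightarrow> nat list \<Rightarrow> complex" where
  "Pr U M \<rho> b a S = mtrace (Vop U M b a S ** \<rho> ** adj (Vop U M b a S))"

definition equiv_on ::
  "('s list \<Rightarrow> nat list \<Rightarrow> bool) \<Rightarrow>
   ('s \<Rightarrow> complex^'n^'n) \<Rightarrow> ('g \<Rightarrow> complex^'n^'n) \<Rightarrow> complex^'n^'n \<Rightarrow>
   ('s \<Rightarrow> complex^'m^'m) \<Rightarrow> ('g \<Rightarrow> complex^'m^'m) \<Rightarrow> complex^'m^'m \<Rightarrow> bool" where
  "equiv_on P U1 M1 \<rho>1 U2 M2 \<rho>2 \<longleftrightarrow>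
     (\<forall>a S b. scheduler S a \<longrightarrow> length b = length S \<longrightarrow> P a S \<longrightarrow>
        Pr U1 M1 \<rho>1 b a S = Pr U2 M2 \<rho>2 b a S)"

definition qequiv where
  "qequiv U1 M1 \<rho>1 U2 M2 \<rho>2 = equiv_on (\<lambda>a S. True) U1 M1 \<rho>1 U2 M2 \<rho>2"

definition qequiv_k where
  "qequiv_k k U1 M1 \<rho>1 U2 M2 \<rho>2 = equiv_on (\<lambda>a S. length S \<le> k) U1 M1 \<rho>1 U2 M2 \<rho>2"

definition qequiv_m where
  "qequiv_m m U1 M1 \<rho>1 U2 M2 \<rho>2 = equiv_on (\<lambda>a S. length a + length S \<le> m) U1 M1 \<rho>1 U2 M2 \<rho>2"

definition qequiv_km where
  "qequiv_km k m U1 M1 \<rho>1 U2 M2 \<rho>2 =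
     equiv_on (\<lambda>a S. length S \<le> k \<and> length a + length S \<le> m) U1 M1 \<rho>1 U2 M2 \<rho>2"

end

theory Submission
  imports Defs
begin

text \<open>For real machines the probability of a run is \<open>tr (V X V\<^sup>T)\<close>, where \<open>V\<close> is the real
  product of the operators along the run and \<open>X\<close> is the real part of the initial state,
  a symmetric matrix. Reading a measurement outcome as one more letter, runs become words over
  \<open>\<Sigma> + \<Gamma>\<close> of length \<open>|a| + |S|\<close>, and the pairs \<open>(V\<^sub>1 X\<^sub>1 V\<^sub>1\<^sup>T, V\<^sub>2 X\<^sub>2 V\<^sub>2\<^sup>T)\<close> stay in the
  space of pairs of real symmetric matrices, of dimension \<open>N' + 1\<close>. In a word of length at
  least \<open>N' + 1\<close> some prefix state is a linear combination of shorter prefix states; cutting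
  out the corresponding infixes reduces the claim for the word to shorter words, and cutting
  never increases the number of measurements.\<close>

section \<open>Symmetric matrices\<close>

definition sym_unit :: "'n set \<Rightarrow> real^'n^'n" where
  "sym_unit A = (\<chi> a b. if {a, b} = A then 1 else 0)"

abbreviation doubletons :: "'n set set" where
  "doubletons \<equiv> (\<lambda>(a, b). {a, b}) ` UNIV"

lemma symmetric_in_span_sym_units:
  fixes X :: "real^'n^'n"
  assumes sym: "transpose X = X"
  shows "X \<in> span (sym_unit ` doubletons)"
proof -
  define c where "c A = (let p = SOME p. {fst p, snd p} = A in X $ fst p $ snd p)" for A :: "'n set"
  have c: "c {a, b} = X $ a $ b" for a b
  proof -
    obtain p where p: "p = (SOME p. {fst p, snd p} = {a, b})" by blast
    have "{fst p, snd p} = {a, b}" unfolding p by (rule someI[of _ "(a, b)"]) simp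
    then have "p = (a, b) \<or> p = (b, a)" by (cases p) (auto simp: doubleton_eq_iff)
    moreover have "X $ b $ a = X $ a $ b" using sym by (metis transpose_def vec_lambda_beta)
    ultimately show ?thesis by (auto simp: c_def p[symmetric])
  qed
  have "X = (\<Sum>A\<in>doubletons. c A *\<^sub>R sym_unit A)"
  proof -
    have "(\<Sum>A\<in>doubletons. c A *\<^sub>R sym_unit A) $ a $ b = X $ a $ b" for a b
    proof -
      have "(\<Sum>A\<in>doubletons. c A *\<^sub>R sym_unit A) $ a $ b
          = (\<Sum>A\<in>doubletons. if {a, b} = A then c A else 0)"
        by (simp add: sum_component sym_unit_def if_distrib cong: if_cong)
      also have "\<dots> = c {a, b}" by (simp add: sum.delta) blast
      finally show ?thesis by (simp add: c)
    qed
    then show ?thesis by (simp add: vec_eq_iff)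
  qed
  also have "\<dots> \<in> span (sym_unit ` doubletons)"
    by (rule span_sum, rule span_scale, rule span_base, rule imageI)
  finally show ?thesis .
qed

lemma card_doubletons: "card (doubletons :: 'n::finite set set) = CARD('n) * (CARD('n) + 1) div 2"
proof -
  have "doubletons = {B :: 'n set. card B = 1} \<union> {B. card B = 2}"
    by (auto simp: card_1_singleton_iff card_2_iff card_insert_if)
  then have "card (doubletons :: 'n set set) = (CARD('n) choose 1) + (CARD('n) choose 2)"
    using n_subsets[of "UNIV :: 'n set"] by (simp add: card_Un_disjoint disjoint_iff)
  also have "\<dots> = CARD('n) * (CARD('n) + 1) div 2"
    by (cases "CARD('n)") (simp_all add: choose_two)
  finally show ?thesis .
qed

lemma subspace_symmetric_matrices: "subspace {X :: real^'n^'n. transpose X = X}"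
  by (auto simp: subspace_def transpose_def vec_eq_iff)

lemma dim_symmetric_matrices:
  "dim {X :: real^'n^'n. transpose X = X} \<le> CARD('n) * (CARD('n) + 1) div 2"
proof -
  have "dim {X :: real^'n^'n. transpose X = X}
      \<le> card (sym_unit ` doubletons :: (real^'n^'n) set)"
    by (rule dim_le_card) (auto intro: symmetric_in_span_sym_units)
  also have "\<dots> \<le> card (doubletons :: 'n set set)" by (rule card_image_le) simp
  finally show ?thesis by (simp add: card_doubletons)
qed

section \<open>Real parts of sandwiched Hermitian matrices\<close>

lemma mtrace_eq_trace: "mtrace = trace"
  by (simp add: fun_eq_iff mtrace_def trace_def)

lemma trace_transpose: "trace (transpose A) = trace (A :: 'a::semiring_1^'n^'n)"
  by (simp add: trace_def transpose_def)

lemma adj_of_real_matrix: "adj (map_matrix of_real A) = map_matrix of_real (transpose A)"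
  by (simp add: adj_def transpose_def vec_eq_iff)

lemma map_matrix_of_real_mult:
  "map_matrix of_real (A ** B) = map_matrix of_real A ** map_matrix (of_real :: real \<Rightarrow> complex) B"
  by (simp add: vec_eq_iff matrix_matrix_mult_def of_real_sum)

lemma map_matrix_of_real_mat: "map_matrix of_real (mat 1) = (mat 1 :: complex^'n^'n)"
  by (simp add: mat_def vec_eq_iff)

lemma map_matrix_of_real_Re: "real_matrix A \<Longrightarrow> map_matrix of_real (map_matrix Re A) = A"
  by (simp add: real_matrix_def vec_eq_iff of_real_Re)

lemma map_matrix_linear_sandwich:
  fixes f :: "complex \<Rightarrow> real"
  assumes "linear f"
  shows "map_matrix f (map_matrix of_real A ** B ** map_matrix of_real C)
           = A ** map_matrix f B ** C"
proof -
  have "f (of_real a * z * of_real c) = a * f z * c" for a c z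
    using linear_scale[OF assms, of "a * c" z] by (simp add: scaleR_conv_of_real mult_ac)
  then show ?thesis
    by (simp add: vec_eq_iff matrix_matrix_mult_def linear_sum[OF assms]
        sum_distrib_left sum_distrib_right)
qed

lemma trace_sandwich_antisymmetric:
  fixes A :: "real^'n^'n"
  assumes "transpose A = - A"
  shows "trace (V ** A ** transpose V) = 0"
proof -
  have "trace (V ** A ** transpose V) = trace (transpose (V ** A ** transpose V))"
    by (simp add: trace_transpose)
  also have "\<dots> = trace (V ** (- A) ** transpose V)"
    by (simp add: matrix_transpose_mul matrix_mul_assoc assms)
  also have "\<dots> = - trace (V ** A ** transpose V)"
    by (simp add: trace_def matrix_matrix_mult_def sum_negf)
  finally show ?thesis by simp
qed

lemma hermitian_entry: "adj \<rho> = \<rho> \<Longrightarrow> \<rho> $ j $ i = cnj (\<rho> $ i $ j)"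
proof -
  assume "adj \<rho> = \<rho>"
  then have "adj \<rho> $ j $ i = \<rho> $ j $ i" by simp
  then show ?thesis by (simp add: adj_def)
qed

lemma hermitian_Re_symmetric: "adj \<rho> = \<rho> \<Longrightarrow> transpose (map_matrix Re \<rho>) = map_matrix Re \<rho>"
proof -
  assume herm: "adj \<rho> = \<rho>"
  have "transpose (map_matrix Re \<rho>) $ i $ j = map_matrix Re \<rho> $ i $ j" for i j
    using hermitian_entry[OF herm, of j i] by (simp add: transpose_def)
  then show ?thesis by (simp add: vec_eq_iff)
qed

lemma hermitian_Im_antisymmetric:
  "adj \<rho> = \<rho> \<Longrightarrow> transpose (map_matrix Im \<rho>) = - map_matrix Im \<rho>"
proof -
  assume herm: "adj \<rho> = \<rho>"
  have "transpose (map_matrix Im \<rho>) $ i $ j = (- map_matrix Im \<rho>) $ i $ j" for i j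
    using hermitian_entry[OF herm, of j i] by (simp add: transpose_def)
  then show ?thesis by (simp add: vec_eq_iff)
qed

lemma trace_map_matrix:
  assumes "linear f"
  shows "f (trace A) = trace (map_matrix f A)"
  by (simp add: trace_def linear_sum[OF assms])

lemma trace_real_sandwich_hermitian:
  fixes V :: "real^'n^'m" and \<rho> :: "complex^'n^'n"
  assumes herm: "adj \<rho> = \<rho>"
  shows "mtrace (map_matrix of_real V ** \<rho> ** adj (map_matrix of_real V))
           = of_real (trace (V ** map_matrix Re \<rho> ** transpose V))"
proof -
  let ?X = "map_matrix of_real V ** \<rho> ** map_matrix of_real (transpose V)"
  have lin: "linear Re" "linear Im"
    by (simp_all add: bounded_linear.linear bounded_linear_Re bounded_linear_Im)
  have "Re (trace ?X) = trace (V ** map_matrix Re \<rho> ** transpose V)"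
    by (simp only: trace_map_matrix[OF lin(1)] map_matrix_linear_sandwich[OF lin(1)])
  moreover have "Im (trace ?X) = trace (V ** map_matrix Im \<rho> ** transpose V)"
    by (simp only: trace_map_matrix[OF lin(2)] map_matrix_linear_sandwich[OF lin(2)])
  moreover have "trace (V ** map_matrix Im \<rho> ** transpose V) = 0"
    by (rule trace_sandwich_antisymmetric[OF hermitian_Im_antisymmetric[OF herm]])
  ultimately show ?thesis
    by (simp add: adj_of_real_matrix mtrace_eq_trace complex_eq_iff)
qed

section \<open>Linear actions of words\<close>

definition sandwich :: "real^'n^'m \<Rightarrow> real^'n^'n \<Rightarrow> real^'m^'m" where
  "sandwich V X = V ** X ** transpose V"

lemma linear_sandwich: "linear (sandwich V)"
  by (rule linearI)
    (simp_all add: sandwich_def vec_eq_iff matrix_matrix_mult_def distrib_left distrib_right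
      sum.distrib sum_distrib_left sum_distrib_right mult_ac)

lemma sandwich_mult: "sandwich (A ** B) X = sandwich A (sandwich B X)"
  by (simp add: sandwich_def matrix_transpose_mul matrix_mul_assoc)

lemma sandwich_symmetric: "transpose X = X \<Longrightarrow> transpose (sandwich V X) = sandwich V X"
  by (simp add: sandwich_def matrix_transpose_mul matrix_mul_assoc)

lemma linear_trace: "linear (trace :: real^'n^'n \<Rightarrow> real)"
  by (rule linearI) (simp_all add: trace_def sum.distrib sum_distrib_left)

fun rUword :: "('a \<Rightarrow> real^'n^'n) \<Rightarrow> 'a list \<Rightarrow> real^'n^'n" where
  "rUword t [] = mat 1"
| "rUword t (x # xs) = rUword t xs ** t x"

lemma rUword_append: "rUword t (u @ v) = rUword t v ** rUword t u"
  by (induction u) (simp_all add: matrix_mul_assoc)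

lemma Uword_of_real_matrices:
  "(\<And>x. real_matrix (T x)) \<Longrightarrow> Uword T w = map_matrix of_real (rUword (map_matrix Re \<circ> T) w)"
  by (induction w)
    (simp_all add: map_matrix_of_real_mult map_matrix_of_real_Re map_matrix_of_real_mat)

lemma exists_in_span_of_predecessors:
  fixes p :: "nat \<Rightarrow> 'v::euclidean_space"
  assumes in_W: "\<And>j. j \<le> N \<Longrightarrow> p j \<in> W" and dim_W: "dim W \<le> N"
  shows "\<exists>i\<le>N. p i \<in> span (p ` {..<i})"
proof (rule ccontr)
  assume "\<not> ?thesis"
  then have fresh: "\<And>i. i \<le> N \<Longrightarrow> p i \<notin> span (p ` {..<i})" by blast
  have "independent (p ` {..<m}) \<and> card (p ` {..<m}) = m" if "m \<le> Suc N" for m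
    using that
  proof (induction m)
    case 0
    then show ?case by (simp add: independent_empty)
  next
    case (Suc m)
    then have IH: "independent (p ` {..<m})" "card (p ` {..<m}) = m" and "m \<le> N" by simp_all
    have "p m \<notin> span (p ` {..<m})" using fresh \<open>m \<le> N\<close> by blast
    moreover from this have "p m \<notin> p ` {..<m}"
      using span_base[of "p m" "p ` {..<m}"] by (rule contrapos_nn)
    moreover have "p ` {..<Suc m} = insert (p m) (p ` {..<m})" by (simp add: lessThan_Suc)
    ultimately show ?case
      using IH by (simp add: independent_insert card_insert_disjoint)
  qed
  then have "independent (p ` {..<Suc N})" and card: "card (p ` {..<Suc N}) = Suc N"
    by simp_all
  moreover have "p ` {..<Suc N} \<subseteq> W" using in_W by (auto simp: less_Suc_eq_le)
  ultimately have "card (p ` {..<Suc N}) \<le> dim W" using independent_card_le_dim by blast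
  then show False using card dim_W by simp
qed

text \<open>Among the first \<open>N + 1\<close> prefixes of a long word one is mapped into the span of the images
  of the shorter ones; cutting out the infix after each shorter prefix gives shorter words.\<close>
lemma linear_functional_vanishes_on_orbit:
  fixes G :: "'a list \<Rightarrow> 'v::euclidean_space \<Rightarrow> 'v" and \<eta> :: "'v \<Rightarrow> real"
  assumes lin: "\<And>u. linear (G u)" and "linear \<eta>"
    and action: "\<And>u v z. G (u @ v) z = G v (G u z)"
    and in_W: "\<And>u. G u z\<^sub>0 \<in> W" and dim_W: "dim W \<le> N"
    and closed: "\<And>w i j. j \<le> i \<Longrightarrow> Q w \<Longrightarrow> Q (take j w @ drop i w)"
    and short: "\<And>w. Q w \<Longrightarrow> length w < N \<Longrightarrow> \<eta> (G w z\<^sub>0) = 0"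
  shows "Q w \<Longrightarrow> \<eta> (G w z\<^sub>0) = 0"
proof (induction "length w" arbitrary: w rule: less_induct)
  case less
  show ?case
  proof (cases "length w < N")
    case True
    then show ?thesis using short less.prems by blast
  next
    case False
    define p where "p j = G (take j w) z\<^sub>0" for j
    obtain i where "i \<le> N" and dep: "p i \<in> span (p ` {..<i})"
      using exists_in_span_of_predecessors[of N p W] dim_W in_W by (auto simp: p_def)
    define L where "L z = \<eta> (G (drop i w) z)" for z
    have "linear L"
      unfolding L_def using linear_compose[OF lin \<open>linear \<eta>\<close>] by (simp add: o_def)
    have "L (p j) = 0" if "j < i" for j
    proof -
      have "L (p j) = \<eta> (G (take j w @ drop i w) z\<^sub>0)" by (simp add: L_def p_def action)
      also have "\<dots> = 0"
        using less.hyps[of "take j w @ drop i w"] closed[of j i w] less.prems that \<open>i \<le> N\<close> False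
        by simp
      finally show ?thesis .
    qed
    then have "L (p i) = 0"
      using span_induct[OF dep, of "\<lambda>z. L z = 0"] linear_subspace_kernel[OF \<open>linear L\<close>] by auto
    moreover have "L (p i) = \<eta> (G w z\<^sub>0)"
      by (simp add: L_def p_def action[symmetric])
    ultimately show ?thesis by simp
  qed
qed

lemma trace_sandwich_eq_if_eq_on_short_words:
  fixes t1 :: "'a \<Rightarrow> real^'n1^'n1" and t2 :: "'a \<Rightarrow> real^'n2^'n2"
  assumes "transpose X = X" and "transpose Y = Y"
    and closed: "\<And>w i j. j \<le> i \<Longrightarrow> Q w \<Longrightarrow> Q (take j w @ drop i w)"
    and short: "\<And>w. Q w
        \<Longrightarrow> length w < CARD('n1) * (CARD('n1) + 1) div 2 + CARD('n2) * (CARD('n2) + 1) div 2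
        \<Longrightarrow> trace (sandwich (rUword t1 w) X) = trace (sandwich (rUword t2 w) Y)"
    and "Q w"
  shows "trace (sandwich (rUword t1 w) X) = trace (sandwich (rUword t2 w) Y)"
proof -
  define G where "G w z = (sandwich (rUword t1 w) (fst z), sandwich (rUword t2 w) (snd z))" for w z
  define \<eta> where "\<eta> z = trace (fst z) - trace (snd z)" for z :: "(real^'n1^'n1) \<times> (real^'n2^'n2)"
  let ?W = "{X :: real^'n1^'n1. transpose X = X} \<times> {X :: real^'n2^'n2. transpose X = X}"
  have lin_G: "linear (G u)" for u
    using linear_sandwich[of "rUword t1 u"] linear_sandwich[of "rUword t2 u"]
    by (simp add: G_def linear_iff)
  have lin_\<eta>: "linear \<eta>"
    using linear_trace[where 'n='n1] linear_trace[where 'n='n2]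
    by (simp add: \<eta>_def linear_iff algebra_simps)
  have action: "G (u @ v) z = G v (G u z)" for u v z
    by (simp add: G_def rUword_append sandwich_mult)
  have in_W: "G u (X, Y) \<in> ?W" for u
    using assms(1,2) by (simp add: G_def sandwich_symmetric)
  have dim_W: "dim ?W \<le> CARD('n1) * (CARD('n1) + 1) div 2 + CARD('n2) * (CARD('n2) + 1) div 2"
    using dim_symmetric_matrices[where 'n='n1] dim_symmetric_matrices[where 'n='n2]
    by (simp add: dim_Times subspace_symmetric_matrices add_mono)
  have "\<eta> (G w (X, Y)) = 0"
  proof (rule linear_functional_vanishes_on_orbit[where Q = Q, OF lin_G lin_\<eta> action in_W dim_W])
    show "\<And>w i j. j \<le> i \<Longrightarrow> Q w \<Longrightarrow> Q (take j w @ drop i w)" by (fact closed)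
    show "\<eta> (G v (X, Y)) = 0"
      if "Q v" "length v < CARD('n1) * (CARD('n1) + 1) div 2 + CARD('n2) * (CARD('n2) + 1) div 2"
      for v
      using short[OF that] by (simp add: G_def \<eta>_def)
  qed (fact \<open>Q w\<close>)
  then show ?thesis by (simp add: G_def \<eta>_def)
qed

section \<open>Runs of a machine as words\<close>

text \<open>Words over \<open>'s + 'g\<close> encode triples (a, S, b): each \<open>Inr g\<close> is a measurement
  with outcome \<open>g\<close>, scheduled after the inputs read so far.\<close>
fun decode :: "('s + 'g) list \<Rightarrow> 's list \<times> nat list \<times> 'g list" where
  "decode [] = ([], [], [])"
| "decode (Inl s # w) = (case decode w of (a, S, b) \<Rightarrow> (s # a, map Suc S, b))"
| "decode (Inr g # w) = (case decode w of (a, S, b) \<Rightarrow> (a, 0 # S, g # b))"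

lemma decode_wellformed:
  "decode w = (a, S, b) \<Longrightarrow> scheduler S a \<and> length b = length S
     \<and> length a + length S = length w \<and> length S = length (filter (\<lambda>x. \<not> isl x) w)"
  by (induction w arbitrary: a S b rule: decode.induct)
    (auto simp: scheduler_def sorted_map split: prod.splits)

lemma decode_surj:
  assumes "scheduler S a" and "length b = length S"
  shows "\<exists>w. decode w = (a, S, b)"
  using assms
proof (induction "length a + length S" arbitrary: a S b rule: less_induct)
  case less
  show ?case
  proof (cases S)
    case Nil
    then have "b = []" using less.prems by simp
    have "decode (map Inl a) = (a, [], [])" by (induction a) simp_all
    then show ?thesis using Nil \<open>b = []\<close> by blast
  next
    case (Cons s S')
    show ?thesis
    proof (cases s)
      case 0
      obtain g b' where b: "b = g # b'" using less.prems(2) Cons by (cases b) auto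
      have "scheduler S' a" using less.prems(1) by (simp add: Cons scheduler_def)
      then obtain w where "decode w = (a, S', b')"
        using less.hyps[of a S' b'] less.prems(2) by (auto simp: Cons b)
      then have "decode (Inr g # w) = (a, S, b)" by (simp add: Cons b 0)
      then show ?thesis by blast
    next
      case (Suc s')
      have pos: "\<forall>x\<in>set S. 0 < x"
        using less.prems(1) by (auto simp: Cons Suc scheduler_def)
      then obtain x a' where a: "a = x # a'"
        using less.prems(1) by (cases a) (auto simp: Cons scheduler_def)
      define T where "T = map (\<lambda>x. x - 1) S"
      have S: "S = map Suc T" unfolding T_def using pos by (induction S) auto
      have "scheduler T a'" using less.prems(1) by (simp add: scheduler_def a S sorted_map)
      then obtain w where "decode w = (a', T, b)"
        using less.hyps[of a' T b] less.prems(2) by (auto simp: a S)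
      then have "decode (Inl x # w) = (a, S, b)" by (simp add: a S)
      then show ?thesis by blast
    qed
  qed
qed

lemma segments_Cons_0: "segments a (0 # S) = [] # segments a S"
  by (simp add: segments_def)

lemma segments_Cons_Suc:
  "segments (s # a) (map Suc S) = (s # hd (segments a S)) # tl (segments a S)"
proof (cases S)
  case Nil
  then show ?thesis by (simp add: segments_def)
next
  case (Cons x S')
  have "zip (Suc x # map Suc S') (map Suc S' @ [Suc (length a)])
      = map (\<lambda>(l, r). (Suc l, Suc r)) (zip (x # S') (S' @ [length a]))"
    by (simp add: zip_map_map[of Suc "x # S'" Suc "S' @ [length a]", simplified])
  then show ?thesis using Cons by (simp add: segments_def split: prod.splits)
qed

lemma Vprod_Cons_Cons: "Vprod U M ((s # x) # xs) b = Vprod U M (x # xs) b ** U s"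
  by (cases xs; cases b) (simp_all add: matrix_mul_assoc)

lemma Vop_decode: "decode w = (a, S, b) \<Longrightarrow> Vop U M b a S = Uword (case_sum U M) w"
proof (induction w arbitrary: a S b rule: decode.induct)
  case 1
  then show ?case by (simp add: Vop_def segments_def)
next
  case (2 s w)
  obtain a' S' b' where d: "decode w = (a', S', b')" by (metis prod_cases3)
  then have [simp]: "a = s # a'" "S = map Suc S'" "b = b'" using "2.prems" by auto
  obtain x xs where seg: "segments a' S' = x # xs"
    by (cases "segments a' S'") (simp_all add: segments_def)
  have "Vop U M b a S = Vprod U M (x # xs) b' ** U s"
    by (simp add: Vop_def segments_Cons_Suc seg Vprod_Cons_Cons)
  also have "\<dots> = Uword (case_sum U M) w ** U s"
    using "2.IH"[OF d] by (simp add: Vop_def seg)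
  finally show ?case by simp
next
  case (3 g w)
  obtain a' S' b' where d: "decode w = (a', S', b')" by (metis prod_cases3)
  then have [simp]: "a = a'" "S = 0 # S'" "b = g # b'" using "3.prems" by auto
  obtain x xs where seg: "segments a' S' = x # xs"
    by (cases "segments a' S'") (simp_all add: segments_def)
  have "Vop U M b a S = Vprod U M (x # xs) b' ** M g"
    by (simp add: Vop_def segments_Cons_0 seg)
  also have "\<dots> = Uword (case_sum U M) w ** M g"
    using "3.IH"[OF d] by (simp add: Vop_def seg)
  finally show ?case by simp
qed

section \<open>Reduction to short runs\<close>

lemma Pr_decode:
  assumes "real_qmm U M" and "adj \<rho> = \<rho>" and "decode w = (a, S, b)"
  shows "Pr U M \<rho> b a S = of_real (trace
           (sandwich (rUword (map_matrix Re \<circ> case_sum U M) w) (map_matrix Re \<rho>)))"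
proof -
  have "\<And>x. real_matrix (case_sum U M x)"
    using assms(1) by (auto simp: real_qmm_def split: sum.split)
  then have "Vop U M b a S = map_matrix of_real (rUword (map_matrix Re \<circ> case_sum U M) w)"
    using Vop_decode[OF assms(3)] Uword_of_real_matrices by metis
  then show ?thesis
    by (simp add: Pr_def trace_real_sandwich_hermitian[OF assms(2)] sandwich_def)
qed

lemma length_filter_cut_infix:
  "j \<le> i \<Longrightarrow> length (filter P (take j w @ drop i w)) \<le> length (filter P w)"
proof -
  assume "j \<le> i"
  then have "drop i w = drop (i - j) (drop j w)" by simp
  then have "length (filter P (drop i w)) \<le> length (filter P (drop j w))"
    by (metis append_take_drop_id filter_append length_append le_add2)
  then show ?thesis
    by (metis append_take_drop_id filter_append length_append add_le_mono1 add_left_mono)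
qed

lemma equiv_on_iff_short:
  fixes U1 :: "'s::finite \<Rightarrow> complex^'n1^'n1" and M1 :: "'g::finite \<Rightarrow> complex^'n1^'n1"
    and U2 :: "'s \<Rightarrow> complex^'n2^'n2" and M2 :: "'g \<Rightarrow> complex^'n2^'n2"
    and \<rho>1 :: "complex^'n1^'n1" and \<rho>2 :: "complex^'n2^'n2"
  assumes "real_qmm U1 M1" and "real_qmm U2 M2" and "adj \<rho>1 = \<rho>1" and "adj \<rho>2 = \<rho>2"
    and down: "\<And>l l'. l' \<le> l \<Longrightarrow> R l \<Longrightarrow> R l'"
  defines "N \<equiv> CARD('n1) * (CARD('n1) + 1) div 2 + CARD('n2) * (CARD('n2) + 1) div 2"
  shows "equiv_on (\<lambda>a S. R (length S)) U1 M1 \<rho>1 U2 M2 \<rho>2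
     \<longleftrightarrow> equiv_on (\<lambda>a S. R (length S) \<and> length a + length S < N) U1 M1 \<rho>1 U2 M2 \<rho>2"
proof
  assume "equiv_on (\<lambda>a S. R (length S)) U1 M1 \<rho>1 U2 M2 \<rho>2"
  then show "equiv_on (\<lambda>a S. R (length S) \<and> length a + length S < N) U1 M1 \<rho>1 U2 M2 \<rho>2"
    by (simp add: equiv_on_def)
next
  assume short: "equiv_on (\<lambda>a S. R (length S) \<and> length a + length S < N) U1 M1 \<rho>1 U2 M2 \<rho>2"
  define Q where "Q w \<longleftrightarrow> R (length (filter (\<lambda>x. \<not> isl x) w))" for w :: "('s + 'g) list"
  let ?tr1 = "\<lambda>w. trace (sandwich (rUword (map_matrix Re \<circ> case_sum U1 M1) w) (map_matrix Re \<rho>1))"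
  let ?tr2 = "\<lambda>w. trace (sandwich (rUword (map_matrix Re \<circ> case_sum U2 M2) w) (map_matrix Re \<rho>2))"
  have Pr_eq_iff: "Pr U1 M1 \<rho>1 b a S = Pr U2 M2 \<rho>2 b a S \<longleftrightarrow> ?tr1 w = ?tr2 w"
    if "decode w = (a, S, b)" for w a S b
    using Pr_decode[OF assms(1,3) that] Pr_decode[OF assms(2,4) that] by simp
  have "?tr1 w = ?tr2 w" if "Q w" for w
  proof (rule trace_sandwich_eq_if_eq_on_short_words
      [where X = "map_matrix Re \<rho>1" and Y = "map_matrix Re \<rho>2" and Q = Q, folded N_def])
    show "transpose (map_matrix Re \<rho>1) = map_matrix Re \<rho>1"
      and "transpose (map_matrix Re \<rho>2) = map_matrix Re \<rho>2"
      using hermitian_Re_symmetric assms(3,4) by blast+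
    show "Q (take j w @ drop i w)" if "j \<le> i" "Q w" for w i j
      using that down length_filter_cut_infix by (metis Q_def)
    show "?tr1 w = ?tr2 w" if "Q w" "length w < N" for w
    proof -
      obtain a S b where d: "decode w = (a, S, b)" by (metis prod_cases3)
      then show ?thesis
        using short decode_wellformed[OF d] that Pr_eq_iff[OF d] by (auto simp: equiv_on_def Q_def)
    qed
  qed (fact that)
  then show "equiv_on (\<lambda>a S. R (length S)) U1 M1 \<rho>1 U2 M2 \<rho>2"
    unfolding equiv_on_def
  proof (intro allI impI)
    fix a :: "'s list" and S :: "nat list" and b :: "'g list"
    assume "scheduler S a" "length b = length S" "R (length S)"
    moreover obtain w where d: "decode w = (a, S, b)"
      using decode_surj \<open>scheduler S a\<close> \<open>length b = length S\<close> by blast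
    ultimately show "Pr U1 M1 \<rho>1 b a S = Pr U2 M2 \<rho>2 b a S"
      using \<open>\<And>w. Q w \<Longrightarrow> ?tr1 w = ?tr2 w\<close> decode_wellformed[OF d] Pr_eq_iff[OF d]
      by (simp add: Q_def)
  qed
qed

theorem mainTheorem4:
  fixes U1 :: "'s::finite \<Rightarrow> complex^'n1^'n1" and M1 :: "'g::finite \<Rightarrow> complex^'n1^'n1"
    and U2 :: "'s \<Rightarrow> complex^'n2^'n2" and M2 :: "'g \<Rightarrow> complex^'n2^'n2"
    and \<rho>1 :: "complex^'n1^'n1" and \<rho>2 :: "complex^'n2^'n2"
  assumes "real_qmm U1 M1" and "real_qmm U2 M2"
    and "density_op \<rho>1" and "density_op \<rho>2"
  defines "N' \<equiv> CARD('n1) * (CARD('n1) + 1) div 2 + CARD('n2) * (CARD('n2) + 1) div 2 - 1"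
  shows "(qequiv U1 M1 \<rho>1 U2 M2 \<rho>2 \<longleftrightarrow> qequiv_m N' U1 M1 \<rho>1 U2 M2 \<rho>2)
       \<and> (\<forall>k::nat. qequiv_k k U1 M1 \<rho>1 U2 M2 \<rho>2 \<longleftrightarrow> qequiv_km k N' U1 M1 \<rho>1 U2 M2 \<rho>2)"
proof -
  have herm: "adj \<rho>1 = \<rho>1" "adj \<rho>2 = \<rho>2"
    using assms(3,4) by (simp_all add: density_op_def)
  have "1 * 2 \<le> CARD('n1) * (CARD('n1) + 1)"
    using finite_UNIV_card_ge_0[where 'a='n1] by (intro mult_le_mono) auto
  then have less_iff: "l < CARD('n1) * (CARD('n1) + 1) div 2 + CARD('n2) * (CARD('n2) + 1) div 2
      \<longleftrightarrow> l \<le> N'" for l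
    unfolding N'_def by linarith
  note short_iff = equiv_on_iff_short[OF assms(1,2) herm, unfolded less_iff]
  have "qequiv U1 M1 \<rho>1 U2 M2 \<rho>2 \<longleftrightarrow> qequiv_m N' U1 M1 \<rho>1 U2 M2 \<rho>2"
    using short_iff[of "\<lambda>_. True"] by (simp add: qequiv_def qequiv_m_def)
  moreover have "qequiv_k k U1 M1 \<rho>1 U2 M2 \<rho>2 \<longleftrightarrow> qequiv_km k N' U1 M1 \<rho>1 U2 M2 \<rho>2" for k
    using short_iff[of "\<lambda>l. l \<le> k"] by (simp add: qequiv_k_def qequiv_km_def)
  ultimately show ?thesis by blast
qed

end
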